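(* Let $B\in\mathbb R^{n\times m}$, let $T_{\mathcal U}$ be a symmetric positive definite $m\times m$ matrix, and let $f:\mathbb R^m\to\mathbb R$ be differentiable with $f\in\mathcal S^{1,1}_{\mu_{f,T_{\mathcal U}},L_{f,T_{\mathcal U}}}$ with respect to $T_{\mathcal U}$. For $u_1,u_2\in\mathbb R^m$, $p_1,p_2\in\mathbb R^n$, let $v_i=u_i+T_{\mathcal U}^{-1}B^\top p_i$. Then $$\big(\nabla f(u_1)-\nabla f(u_2),T_{\mathcal U}^{-1}B^\top(p_1-p_2)\big)\ge\frac{\mu_{f,T_{\mathcal U}}}{2}\|v_1-v_2\|^2_{T_{\mathcal U}}-\frac{L_{f,T_{\mathcal U}}}{2}\|B^\top(p_1-p_2)\|^2_{T_{\mathcal U}^{-1}}-\frac12\big(\nabla f(u_1)-\nabla f(u_2),u_1-u_2\big).$$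
   Context: For SPD $M$, $\|x\|_M=(Mx,x)^{1/2}$; $D_f(y,x)=f(y)-f(x)-(\nabla f(x),y-x)$; $f\in\mathcal S^{1,1}_{\mu_{f,M},L_{f,M}}$ w.r.t. $M$ means $\frac{\mu_{f,M}}2\|x-y\|_M^2\le D_f(y,x)\le\frac{L_{f,M}}2\|x-y\|_M^2$ for all $x,y$, with $\mu_{f,M}\ge0$. *)

theory Defs
  imports "HOL-Analysis.Analysis"
begin

definition spd :: "real^'m^'m \<Rightarrow> bool" where
  "spd M \<longleftrightarrow> transpose M = M \<and> (\<forall>x. x \<noteq> 0 \<longrightarrow> (M *v x) \<bullet> x > 0)"

definition normM :: "real^'m^'m \<Rightarrow> real^'m \<Rightarrow> real" where
  "normM M x = sqrt ((M *v x) \<bullet> x)"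

definition bregman :: "(real^'m \<Rightarrow> real) \<Rightarrow> (real^'m \<Rightarrow> real^'m) \<Rightarrow> real^'m \<Rightarrow> real^'m \<Rightarrow> real" where
  "bregman f g y x = f y - f x - g x \<bullet> (y - x)"

definition S11 :: "real^'m^'m \<Rightarrow> real \<Rightarrow> real \<Rightarrow> (real^'m \<Rightarrow> real) \<Rightarrow> (real^'m \<Rightarrow> real^'m) \<Rightarrow> bool" where
  "S11 M mu L f g \<longleftrightarrow> mu \<ge> 0 \<and>
     (\<forall>x y. mu / 2 * (normM M (x - y))\<^sup>2 \<le> bregman f g y x \<and>
            bregman f g y x \<le> L / 2 * (normM M (x - y))\<^sup>2)"

end

theory Submission
  imports Defs
begin

text \<open>Write \<open>w = T\<^sup>-\<^sup>1 B\<^sup>T (p1 - p2)\<close>, so that \<open>v1 - v2 = (u1 - u2) + w\<close> and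
  \<open>\<parallel>B\<^sup>T (p1 - p2)\<parallel>_{T\<^sup>-\<^sup>1} = \<parallel>w\<parallel>_T\<close>. The three-point identity for Bregman distances expresses
  \<open>(\<nabla>f(u1) - \<nabla>f(u2), w)\<close> once through the point \<open>u1 + w\<close> and once through \<open>u2 - w\<close>.
  Averaging the two expressions, the distances from \<open>u2\<close> to \<open>u1 + w\<close> and from \<open>u1\<close> to
  \<open>u2 - w\<close> are bounded below by \<open>\<mu>/2 \<parallel>u1 - u2 + w\<parallel>\<^sup>2\<close>, the distances across the step
  \<open>\<plusminus>w\<close> are bounded above by \<open>L/2 \<parallel>w\<parallel>\<^sup>2\<close>, and the remaining
  \<open>D(u1,u2) + D(u2,u1)\<close> is exactly \<open>(\<nabla>f(u1) - \<nabla>f(u2), u1 - u2)\<close>.\<close>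

lemma matrix_mul_matrix_inv:
  assumes "invertible A"
  shows "A ** matrix_inv A = mat 1"
  using assms unfolding invertible_def matrix_inv_def by (rule someI2_ex) blast

lemma matrix_vector_mul_matrix_inv:
  assumes "invertible A"
  shows "A *v (matrix_inv A *v y) = y"
  by (simp add: matrix_vector_mul_assoc matrix_mul_matrix_inv[OF assms])

lemma spd_invertible:
  assumes "spd M"
  shows "invertible M"
proof -
  have "x = 0" if "M *v x = 0" for x
    using assms that unfolding spd_def by force
  then show ?thesis
    using invertible_left_inverse matrix_left_invertible_ker by blast
qed

lemma normM_minus: "normM M (- x) = normM M x"
  using matrix_vector_mult_diff_distrib[of M 0 x] unfolding normM_def by simp

lemma normM_matrix_inv:
  assumes "invertible M"
  shows "normM (matrix_inv M) y = normM M (matrix_inv M *v y)"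
  unfolding normM_def
  by (metis inner_commute matrix_vector_mul_matrix_inv[OF assms])

lemma bregman_three_point:
  "(g x - g y) \<bullet> (z - x) = bregman f g z y - bregman f g z x - bregman f g x y"
  unfolding bregman_def by (simp add: inner_diff_left inner_diff_right algebra_simps)

lemma bregman_symmetrized:
  "(g x - g y) \<bullet> (x - y) = bregman f g x y + bregman f g y x"
  unfolding bregman_def by (simp add: inner_diff_left inner_diff_right algebra_simps)

lemma S11_inner_gradient_diff_lower_bound:
  assumes "S11 M mu L f g"
  shows "(g u1 - g u2) \<bullet> w
         \<ge> mu / 2 * (normM M (u1 - u2 + w))\<^sup>2 - L / 2 * (normM M w)\<^sup>2
           - 1 / 2 * ((g u1 - g u2) \<bullet> (u1 - u2))"
proof -
  let ?D = "bregman f g"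
  have lower: "mu / 2 * (normM M (x - y))\<^sup>2 \<le> ?D y x"
    and upper: "?D y x \<le> L / 2 * (normM M (x - y))\<^sup>2" for x y
    using assms unfolding S11_def by blast+
  have via_u1: "(g u1 - g u2) \<bullet> w = ?D (u1 + w) u2 - ?D (u1 + w) u1 - ?D u1 u2"
    using bregman_three_point[of g u1 u2 "u1 + w" f] by simp
  have via_u2: "(g u1 - g u2) \<bullet> w = ?D (u2 - w) u1 - ?D (u2 - w) u2 - ?D u2 u1"
    using bregman_three_point[of g u2 u1 "u2 - w" f] by (simp add: inner_diff_left)
  have "mu / 2 * (normM M (u1 - u2 + w))\<^sup>2 \<le> ?D (u1 + w) u2"
    using lower[where x = u2 and y = "u1 + w"] normM_minus[of M "u1 - u2 + w"] by (simp add: algebra_simps)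
  moreover have "mu / 2 * (normM M (u1 - u2 + w))\<^sup>2 \<le> ?D (u2 - w) u1"
    using lower[where x = u1 and y = "u2 - w"] by (simp add: algebra_simps)
  moreover have "?D (u1 + w) u1 \<le> L / 2 * (normM M w)\<^sup>2"
    using upper[where x = u1 and y = "u1 + w"] normM_minus[of M w] by simp
  moreover have "?D (u2 - w) u2 \<le> L / 2 * (normM M w)\<^sup>2"
    using upper[where x = u2 and y = "u2 - w"] by simp
  ultimately show ?thesis
    using via_u1 via_u2 bregman_symmetrized[of g u1 u2 f] by linarith
qed

text \<open>Only the invertibility of \<open>T\<close> and the \<open>S11\<close> inequalities are used.\<close>

theorem lemma5p1:
  fixes B :: "real^'m^'n" and T :: "real^'m^'m"
    and f :: "real^'m \<Rightarrow> real" and gradf :: "real^'m \<Rightarrow> real^'m"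
    and mu L :: real and u1 u2 :: "real^'m" and p1 p2 :: "real^'n"
  assumes "spd T"
    and "\<And>x. (f has_derivative (\<lambda>h. gradf x \<bullet> h)) (at x)"
    and "S11 T mu L f gradf"
  defines "v1 \<equiv> u1 + matrix_inv T *v (transpose B *v p1)"
    and "v2 \<equiv> u2 + matrix_inv T *v (transpose B *v p2)"
  shows "(gradf u1 - gradf u2) \<bullet> (matrix_inv T *v (transpose B *v (p1 - p2)))
         \<ge> mu / 2 * (normM T (v1 - v2))\<^sup>2
           - L / 2 * (normM (matrix_inv T) (transpose B *v (p1 - p2)))\<^sup>2
           - 1 / 2 * ((gradf u1 - gradf u2) \<bullet> (u1 - u2))"
proof -
  define w where "w = matrix_inv T *v (transpose B *v (p1 - p2))"
  have "v1 - v2 = u1 - u2 + w"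
    unfolding v1_def v2_def w_def by (simp add: matrix_vector_mult_diff_distrib algebra_simps)
  moreover have "normM (matrix_inv T) (transpose B *v (p1 - p2)) = normM T w"
    unfolding w_def using normM_matrix_inv[OF spd_invertible[OF assms(1)]] .
  ultimately show ?thesis
    using S11_inner_gradient_diff_lower_bound[OF assms(3), of u1 u2 w] unfolding w_def by simp
qed

end
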